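(* In the setting $X = qA + E_X$, $H = bA + E_H$, $Y = cX + dH + E_Y$ with $A, E_X, E_H, E_Y$ mutually independent, $A$ having a density, $c\neq 0$, $qc+bd\ne 0$, $E:=E_Y+dE_H$, and $\widehat{Y}=\alpha A+\beta X$ with $\beta\neq 0$, suppose $E_X\sim\mathcal{N}(\mu_1,\sigma_{E_X}^2)$ and $E\sim\mathcal{N}(\mu_2,\sigma_E^2)$ are Gaussian with positive variances ($A$ need not be Gaussian). Then $\widehat{Y}\perp A\mid Y$ if and only if $$\frac{\alpha}{\beta}=\frac{bdc\,\sigma_{E_X}^2 - q\,\sigma_E^2}{c^2\sigma_{E_X}^2+\sigma_E^2}.$$
   Context: $U\perp V\mid W$ denotes conditional independence of $U$ and $V$ given $W$. $H$ is an unobserved variable; $q,b,c,d,\alpha,\beta$ are real constants. *)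

theory Defs
  imports "HOL-Probability.Probability"
begin

definition cond_indep_given ::
  "'a measure \<Rightarrow> ('a \<Rightarrow> real) \<Rightarrow> ('a \<Rightarrow> real) \<Rightarrow> ('a \<Rightarrow> real) \<Rightarrow> bool" where
  "cond_indep_given M U V W \<longleftrightarrow>
     (\<forall>S \<in> sets borel. \<forall>T \<in> sets borel.
        AE \<omega> in M.
          real_cond_exp M (vimage_algebra (space M) W borel)
             (\<lambda>x. indicator S (U x) * indicator T (V x)) \<omega>
          = real_cond_exp M (vimage_algebra (space M) W borel) (\<lambda>x. indicator S (U x)) \<omega>
            * real_cond_exp M (vimage_algebra (space M) W borel) (\<lambda>x. indicator T (V x)) \<omega>)"

end

theory Submission
  imports Defs
begin

text \<open>Write S = c E_X + E for the noise in Y, so that Y = k A + S with k = q c + b d. The Gaussian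
  pair (E_X, S) can be decorrelated: for l = c \<sigma>EX^2 / (c^2 \<sigma>EX^2 + \<sigma>E^2) the residual R = E_X - l S is
  independent of S, so A, S, R are independent and Yhat = \<beta> l Y + \<gamma> A + \<beta> R with
  \<gamma> = \<alpha> + \<beta> q - \<beta> l k. Given (Y, A), Yhat is therefore distributed as \<beta> l Y + \<gamma> A + \<beta> R.
  If \<gamma> = 0 this law depends on Y alone, which is conditional independence. If \<gamma> \<noteq> 0, a tail
  probability of this law is strictly monotone in A, and conditional independence would make some
  Y-measurable event separate {A \<le> t} from {A > t} for a median t of A; this is impossible since
  Y = k A + S with S Gaussian and independent of A. Finally \<gamma> = 0 is the stated formula for \<alpha>/\<beta>.\<close>

lemma normal_density_shear_factorizes:
  fixes l c \<mu>1 \<mu>2 \<sigma>1 \<sigma>2 u v :: real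
  assumes pos: "\<sigma>1 > 0" "\<sigma>2 > 0" and l: "l * (c\<^sup>2 * \<sigma>1\<^sup>2 + \<sigma>2\<^sup>2) = c * \<sigma>1\<^sup>2"
  defines "Q \<equiv> \<lambda>u v. normal_density \<mu>1 \<sigma>1 (l * v + u) * normal_density \<mu>2 \<sigma>2 (v - c * (l * v + u))"
  shows "Q u v * Q 0 0 = Q u 0 * Q 0 v"
proof -
  define e where "e u v = - (l * v + u - \<mu>1)\<^sup>2 / (2 * \<sigma>1\<^sup>2) - (v - c * (l * v + u) - \<mu>2)\<^sup>2 / (2 * \<sigma>2\<^sup>2)" for u v
  define K where "K = 1 / sqrt (2 * pi * \<sigma>1\<^sup>2) * (1 / sqrt (2 * pi * \<sigma>2\<^sup>2))"
  have Q_exp: "Q u v = K * exp (e u v)" for u v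
    unfolding Q_def e_def K_def normal_density_def by (simp add: exp_diff exp_minus field_simps)
  \<comment> \<open>the coefficient of the cross term u v vanishes exactly by the hypothesis on l\<close>
  have "e u v + e 0 0 - e u 0 - e 0 v = u * v * (c * \<sigma>1\<^sup>2 - l * (c\<^sup>2 * \<sigma>1\<^sup>2 + \<sigma>2\<^sup>2)) / (\<sigma>1\<^sup>2 * \<sigma>2\<^sup>2)"
    unfolding e_def using pos by (simp add: field_simps power2_eq_square)
  then have "exp (e u v) * exp (e 0 0) = exp (e u 0) * exp (e 0 v)"
    using l by (simp flip: exp_add)
  then show ?thesis unfolding Q_exp by (simp add: algebra_simps)
qed

lemma nn_integral_indicator_comp:
  assumes [measurable]: "f \<in> measurable M N" "B \<in> sets N"
  shows "(\<integral>\<^sup>+x. indicator B (f x) \<partial>M) = emeasure M {x \<in> space M. f x \<in> B}"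
proof -
  have "(\<integral>\<^sup>+x. indicator B (f x) \<partial>M) = (\<integral>\<^sup>+x. indicator {x \<in> space M. f x \<in> B} x \<partial>M)"
    by (rule nn_integral_cong) (simp add: indicator_def)
  also have "\<dots> = emeasure M {x \<in> space M. f x \<in> B}"
    by (rule nn_integral_indicator) measurable
  finally show ?thesis .
qed

lemma AE_not_in_if_set_integral_eq_less:
  fixes f g :: "'a \<Rightarrow> real"
  assumes D[measurable]: "D \<in> sets M"
    and int: "set_integrable M D f" "set_integrable M D g"
    and eq: "(\<integral>x\<in>D. f x \<partial>M) = (\<integral>x\<in>D. g x \<partial>M)"
    and less: "\<And>x. x \<in> D \<Longrightarrow> f x < g x"
  shows "AE x in M. x \<notin> D"
proof -
  have int_f: "integrable M (\<lambda>x. indicator D x * f x)" and int_g: "integrable M (\<lambda>x. indicator D x * g x)"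
    using int unfolding set_integrable_def by simp_all
  have int_diff: "integrable M (\<lambda>x. indicator D x * (g x - f x))"
    using Bochner_Integration.integrable_diff[OF int_g int_f] by (simp add: algebra_simps)
  have "(\<integral>x. indicator D x * (g x - f x) \<partial>M) = 0"
    using Bochner_Integration.integral_diff[OF int_g int_f] eq
    unfolding set_lebesgue_integral_def by (simp add: algebra_simps)
  moreover have "0 \<le> indicator D x * (g x - f x)" for x
    using less[of x] by (auto simp: indicator_def)
  ultimately have "AE x in M. indicator D x * (g x - f x) = 0"
    using integral_nonneg_eq_0_iff_AE[OF int_diff] by simp
  then show ?thesis
    by eventually_elim (use less in \<open>fastforce simp: indicator_def\<close>)
qed

context prob_space
begin

lemma nn_integral_indep_var:
  assumes ind: "indep_var Ma X Mb Y" and h[measurable]: "h \<in> borel_measurable (Ma \<Otimes>\<^sub>M Mb)"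
  shows "(\<integral>\<^sup>+\<omega>. h (X \<omega>, Y \<omega>) \<partial>M) = (\<integral>\<^sup>+x. \<integral>\<^sup>+y. h (x, y) \<partial>distr M Mb Y \<partial>distr M Ma X)"
proof -
  have [measurable]: "random_variable Ma X" "random_variable Mb Y"
    using ind by (auto dest: indep_var_rv1 indep_var_rv2)
  interpret PX: prob_space "distr M Ma X" by (rule prob_space_distr) simp
  interpret PY: prob_space "distr M Mb Y" by (rule prob_space_distr) simp
  interpret pair_sigma_finite "distr M Ma X" "distr M Mb Y" ..
  have "(\<integral>\<^sup>+\<omega>. h (X \<omega>, Y \<omega>) \<partial>M) = (\<integral>\<^sup>+z. h z \<partial>distr M (Ma \<Otimes>\<^sub>M Mb) (\<lambda>\<omega>. (X \<omega>, Y \<omega>)))"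
    by (subst nn_integral_distr) auto
  also have "\<dots> = (\<integral>\<^sup>+z. h z \<partial>(distr M Ma X \<Otimes>\<^sub>M distr M Mb Y))"
    using ind by (simp add: indep_var_distribution_eq)
  also have "\<dots> = (\<integral>\<^sup>+x. \<integral>\<^sup>+y. h (x, y) \<partial>distr M Mb Y \<partial>distr M Ma X)"
    by (subst PY.nn_integral_fst[symmetric]) auto
  finally show ?thesis .
qed

lemma indep_var_if_emeasure_factorizes:
  fixes S R :: "'a \<Rightarrow> real"
  assumes [measurable]: "random_variable borel S" "random_variable borel R"
    and factor: "\<And>V U. V \<in> sets borel \<Longrightarrow> U \<in> sets borel \<Longrightarrow>
        emeasure M {\<omega> \<in> space M. S \<omega> \<in> V \<and> R \<omega> \<in> U} = F V * G U"
  shows "indep_var borel S borel R"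
proof -
  have total: "F UNIV * G UNIV = 1"
    using factor[of UNIV UNIV] emeasure_space_1 by simp
  have "distr M borel S \<Otimes>\<^sub>M distr M borel R = distr M (borel \<Otimes>\<^sub>M borel) (\<lambda>\<omega>. (S \<omega>, R \<omega>))"
  proof (rule pair_measure_eqI)
    show "sigma_finite_measure (distr M borel S)" "sigma_finite_measure (distr M borel R)"
      by (auto intro!: prob_space_imp_sigma_finite prob_space_distr)
  next
    fix V U assume "V \<in> sets (distr M borel S)" "U \<in> sets (distr M borel R)"
    then have [measurable]: "V \<in> sets borel" "U \<in> sets borel" by auto
    have "emeasure (distr M borel S) V = F V * G UNIV"
      using factor[of V UNIV] by (simp add: emeasure_distr vimage_def Int_def conj_commute)
    moreover have "emeasure (distr M borel R) U = F UNIV * G U"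
      using factor[of UNIV U] by (simp add: emeasure_distr vimage_def Int_def conj_commute)
    moreover have "emeasure (distr M (borel \<Otimes>\<^sub>M borel) (\<lambda>\<omega>. (S \<omega>, R \<omega>))) (V \<times> U) = F V * G U"
      using factor[of V U] by (simp add: emeasure_distr vimage_def Int_def conj_commute)
    moreover have "F V * G UNIV * (F UNIV * G U) = F V * G U * (F UNIV * G UNIV)"
      by (simp add: ac_simps)
    ultimately show "emeasure (distr M borel S) V * emeasure (distr M borel R) U
        = emeasure (distr M (borel \<Otimes>\<^sub>M borel) (\<lambda>\<omega>. (S \<omega>, R \<omega>))) (V \<times> U)"
      using total by simp
  qed simp
  then show ?thesis by (subst indep_var_distribution_eq) auto
qed

lemma emeasure_shear_indep_density:
  fixes X E :: "'a \<Rightarrow> real" and n1 n2 :: "real \<Rightarrow> ennreal"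
  assumes ind: "indep_var borel X borel E"
    and dX: "distributed M lborel X n1" and dE: "distributed M lborel E n2"
    and [measurable]: "V \<in> sets borel" "U \<in> sets borel"
  shows "emeasure M {\<omega> \<in> space M. c * X \<omega> + E \<omega> \<in> V \<and> X \<omega> - l * (c * X \<omega> + E \<omega>) \<in> U}
    = (\<integral>\<^sup>+v. \<integral>\<^sup>+u. n1 (l * v + u) * n2 (v - c * (l * v + u)) * indicator V v * indicator U u \<partial>lborel \<partial>lborel)"
proof -
  have [measurable]: "random_variable borel X" "random_variable borel E"
    using ind by (auto dest: indep_var_rv1 indep_var_rv2)
  have [measurable]: "n1 \<in> borel_measurable borel" "n2 \<in> borel_measurable borel"
    using dX dE by (auto simp: distributed_def)
  have law_X: "distr M borel X = density lborel n1" and law_E: "distr M borel E = density lborel n2"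
    using dX dE unfolding distributed_def by (metis distr_cong sets_lborel)+
  define h :: "real \<Rightarrow> real \<Rightarrow> ennreal"
    where "h x e = indicator V (c * x + e) * indicator U (x - l * (c * x + e))" for x e
  have [measurable]: "(\<lambda>(x, e). h x e) \<in> borel_measurable (borel \<Otimes>\<^sub>M borel)"
    unfolding h_def by measurable
  have "emeasure M {\<omega> \<in> space M. c * X \<omega> + E \<omega> \<in> V \<and> X \<omega> - l * (c * X \<omega> + E \<omega>) \<in> U}
      = (\<integral>\<^sup>+\<omega>. indicator {\<omega> \<in> space M. c * X \<omega> + E \<omega> \<in> V \<and> X \<omega> - l * (c * X \<omega> + E \<omega>) \<in> U} \<omega> \<partial>M)"
    by (rule nn_integral_indicator[symmetric]) measurable
  also have "\<dots> = (\<integral>\<^sup>+\<omega>. (\<lambda>(x, e). h x e) (X \<omega>, E \<omega>) \<partial>M)"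
    by (rule nn_integral_cong) (simp add: h_def indicator_def)
  also have "\<dots> = (\<integral>\<^sup>+x. \<integral>\<^sup>+e. h x e \<partial>distr M borel E \<partial>distr M borel X)"
    using nn_integral_indep_var[OF ind, of "\<lambda>(x, e). h x e"] by simp
  also have "\<dots> = (\<integral>\<^sup>+x. n1 x * (\<integral>\<^sup>+e. n2 e * h x e \<partial>lborel) \<partial>lborel)"
    unfolding law_X law_E
    by (subst nn_integral_density, measurable, subst nn_integral_density) auto
  \<comment> \<open>substitute e = v - c x, then interchange, then x = l v + u\<close>
  also have "\<dots> = (\<integral>\<^sup>+x. \<integral>\<^sup>+v. n1 x * n2 (v - c * x) * indicator V v * indicator U (x - l * v) \<partial>lborel \<partial>lborel)"
  proof (rule nn_integral_cong)
    fix x :: real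
    show "n1 x * (\<integral>\<^sup>+e. n2 e * h x e \<partial>lborel)
        = (\<integral>\<^sup>+v. n1 x * n2 (v - c * x) * indicator V v * indicator U (x - l * v) \<partial>lborel)"
      using nn_integral_real_affine[where c=1 and t="- c * x" and f="\<lambda>e. n2 e * h x e"]
      by (simp add: h_def nn_integral_cmult[symmetric] ac_simps)
  qed
  also have "\<dots> = (\<integral>\<^sup>+v. \<integral>\<^sup>+x. n1 x * n2 (v - c * x) * indicator V v * indicator U (x - l * v) \<partial>lborel \<partial>lborel)"
    by (rule lborel_pair.Fubini'[symmetric]) measurable
  also have "\<dots> = (\<integral>\<^sup>+v. \<integral>\<^sup>+u. n1 (l * v + u) * n2 (v - c * (l * v + u)) * indicator V v * indicator U u \<partial>lborel \<partial>lborel)"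
  proof (rule nn_integral_cong)
    fix v :: real
    show "(\<integral>\<^sup>+x. n1 x * n2 (v - c * x) * indicator V v * indicator U (x - l * v) \<partial>lborel)
        = (\<integral>\<^sup>+u. n1 (l * v + u) * n2 (v - c * (l * v + u)) * indicator V v * indicator U u \<partial>lborel)"
      using nn_integral_real_affine[where c=1 and t="l * v"
          and f="\<lambda>x. n1 x * n2 (v - c * x) * indicator V v * indicator U (x - l * v)"]
      by simp
  qed
  finally show ?thesis .
qed

lemma indep_var_gaussian_decorrelation:
  fixes X E :: "'a \<Rightarrow> real"
  assumes ind: "indep_var borel X borel E"
    and nX: "distributed M lborel X (\<lambda>x. ennreal (normal_density \<mu>1 \<sigma>1 x))"
    and nE: "distributed M lborel E (\<lambda>x. ennreal (normal_density \<mu>2 \<sigma>2 x))"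
    and pos: "\<sigma>1 > 0" "\<sigma>2 > 0" and l: "l * (c\<^sup>2 * \<sigma>1\<^sup>2 + \<sigma>2\<^sup>2) = c * \<sigma>1\<^sup>2"
  shows "indep_var borel (\<lambda>\<omega>. c * X \<omega> + E \<omega>) borel (\<lambda>\<omega>. X \<omega> - l * (c * X \<omega> + E \<omega>))"
proof -
  have [measurable]: "random_variable borel X" "random_variable borel E"
    using ind by (auto dest: indep_var_rv1 indep_var_rv2)
  define Q where "Q u v = normal_density \<mu>1 \<sigma>1 (l * v + u) * normal_density \<mu>2 \<sigma>2 (v - c * (l * v + u))"
    for u v
  define f where "f u = Q u 0" for u
  define g where "g v = Q 0 v / Q 0 0" for v
  have Q00: "Q 0 0 > 0" unfolding Q_def using pos by (simp add: normal_density_pos)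
  have Q_factor: "ennreal (normal_density \<mu>1 \<sigma>1 (l * v + u)) * ennreal (normal_density \<mu>2 \<sigma>2 (v - c * (l * v + u)))
      = ennreal (g v) * ennreal (f u)" for u v
  proof -
    have "Q u v * Q 0 0 = Q u 0 * Q 0 v"
      unfolding Q_def by (rule normal_density_shear_factorizes[OF pos l])
    then have "Q u v = g v * f u" using Q00 unfolding f_def g_def by (simp add: field_simps)
    moreover have "0 \<le> f u" "0 \<le> g v" using Q00 unfolding f_def g_def Q_def by auto
    ultimately have "ennreal (Q u v) = ennreal (g v) * ennreal (f u)" by (simp add: ennreal_mult)
    then show ?thesis unfolding Q_def by (simp add: ennreal_mult)
  qed
  show ?thesis
  proof (rule indep_var_if_emeasure_factorizes)
    fix V U :: "real set" assume [measurable]: "V \<in> sets borel" "U \<in> sets borel"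
    have "emeasure M {\<omega> \<in> space M. c * X \<omega> + E \<omega> \<in> V \<and> X \<omega> - l * (c * X \<omega> + E \<omega>) \<in> U}
        = (\<integral>\<^sup>+v. \<integral>\<^sup>+u. (ennreal (g v) * indicator V v) * (ennreal (f u) * indicator U u) \<partial>lborel \<partial>lborel)"
      unfolding emeasure_shear_indep_density[OF ind nX nE \<open>V \<in> sets borel\<close> \<open>U \<in> sets borel\<close>]
      by (intro nn_integral_cong) (simp only: Q_factor, simp add: ac_simps)
    also have "\<dots> = (\<integral>\<^sup>+v. ennreal (g v) * indicator V v \<partial>lborel) * (\<integral>\<^sup>+u. ennreal (f u) * indicator U u \<partial>lborel)"
      unfolding f_def g_def Q_def
      by (simp add: nn_integral_cmult nn_integral_multc)
    finally show "emeasure M {\<omega> \<in> space M. c * X \<omega> + E \<omega> \<in> V \<and> X \<omega> - l * (c * X \<omega> + E \<omega>) \<in> U}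
        = (\<integral>\<^sup>+v. ennreal (g v) * indicator V v \<partial>lborel) * (\<integral>\<^sup>+u. ennreal (f u) * indicator U u \<partial>lborel)" .
  qed measurable
qed

lemma indep_normal_linear_combination:
  fixes X E :: "'a \<Rightarrow> real"
  assumes ind: "indep_var borel X borel E"
    and nX: "distributed M lborel X (\<lambda>x. ennreal (normal_density \<mu>1 \<sigma>1 x))"
    and nE: "distributed M lborel E (\<lambda>x. ennreal (normal_density \<mu>2 \<sigma>2 x))"
    and pos: "\<sigma>1 > 0" "\<sigma>2 > 0" and nz: "a \<noteq> 0" "b \<noteq> 0"
  shows "\<exists>m s. s > 0 \<and> distributed M lborel (\<lambda>\<omega>. a * X \<omega> + b * E \<omega>) (\<lambda>x. ennreal (normal_density m s x))"
proof -
  have d1: "distributed M lborel (\<lambda>\<omega>. 0 + a * X \<omega>) (\<lambda>x. ennreal (normal_density (0 + a * \<mu>1) (\<bar>a\<bar> * \<sigma>1) x))"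
    by (rule normal_density_affine[OF nX]) (use pos nz in auto)
  have d2: "distributed M lborel (\<lambda>\<omega>. 0 + b * E \<omega>) (\<lambda>x. ennreal (normal_density (0 + b * \<mu>2) (\<bar>b\<bar> * \<sigma>2) x))"
    by (rule normal_density_affine[OF nE]) (use pos nz in auto)
  have "indep_var borel (\<lambda>\<omega>. 0 + a * X \<omega>) borel (\<lambda>\<omega>. 0 + b * E \<omega>)"
    using indep_var_compose[OF ind, of "\<lambda>x. 0 + a * x" borel "\<lambda>x. 0 + b * x" borel]
    by (simp add: comp_def)
  from add_indep_normal[OF this _ _ d1 d2] pos nz
  have "distributed M lborel (\<lambda>\<omega>. a * X \<omega> + b * E \<omega>)
      (\<lambda>x. ennreal (normal_density (a * \<mu>1 + b * \<mu>2) (sqrt ((\<bar>a\<bar> * \<sigma>1)\<^sup>2 + (\<bar>b\<bar> * \<sigma>2)\<^sup>2)) x))"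
    by simp
  moreover have "sqrt ((\<bar>a\<bar> * \<sigma>1)\<^sup>2 + (\<bar>b\<bar> * \<sigma>2)\<^sup>2) > 0"
    using pos nz by (intro real_sqrt_gt_zero add_pos_nonneg) auto
  ultimately show ?thesis by blast
qed

lemma normal_emeasure_nonzero:
  fixes Z :: "'a \<Rightarrow> real"
  assumes Z: "distributed M lborel Z (\<lambda>x. ennreal (normal_density m s x))" and s: "s > 0"
    and B[measurable]: "B \<in> sets borel" and B_nonnull: "emeasure lborel B \<noteq> 0"
  shows "emeasure M {\<omega> \<in> space M. Z \<omega> \<in> B} \<noteq> 0"
proof
  have [measurable]: "Z \<in> borel_measurable M" using Z by (auto simp: distributed_def)
  assume "emeasure M {\<omega> \<in> space M. Z \<omega> \<in> B} = 0"
  moreover have "emeasure M {\<omega> \<in> space M. Z \<omega> \<in> B} = (\<integral>\<^sup>+x. ennreal (normal_density m s x) * indicator B x \<partial>lborel)"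
    using distributed_emeasure[OF Z, of B] by (simp add: vimage_def Int_def conj_commute)
  ultimately have "(\<integral>\<^sup>+x. ennreal (normal_density m s x) * indicator B x \<partial>lborel) = 0"
    by simp
  then have "AE x in lborel. ennreal (normal_density m s x) * indicator B x = 0"
    by (subst (asm) nn_integral_0_iff_AE) auto
  then have "AE x in lborel. x \<notin> B"
  proof eventually_elim
    case (elim x)
    then show ?case using normal_density_pos[OF s, of m x] by (auto simp: indicator_def)
  qed
  then show False using B_nonnull by (subst (asm) AE_iff_null_sets[symmetric]) auto
qed

lemma normal_cdf_strict_mono:
  fixes Z :: "'a \<Rightarrow> real"
  assumes Z: "distributed M lborel Z (\<lambda>x. ennreal (normal_density m s x))" and s: "s > 0"
    and tt: "t < t'"
  shows "prob {\<omega> \<in> space M. Z \<omega> \<le> t} < prob {\<omega> \<in> space M. Z \<omega> \<le> t'}"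
proof -
  have [measurable]: "Z \<in> borel_measurable M" using Z by (auto simp: distributed_def)
  have "emeasure M {\<omega> \<in> space M. Z \<omega> \<in> {t<..t'}} \<noteq> 0"
    by (rule normal_emeasure_nonzero[OF Z s]) (use tt in auto)
  then have "0 < prob {\<omega> \<in> space M. Z \<omega> \<in> {t<..t'}}"
    by (simp add: emeasure_eq_measure zero_less_measure_iff)
  moreover have "prob {\<omega> \<in> space M. Z \<omega> \<le> t'} = prob {\<omega> \<in> space M. Z \<omega> \<le> t} + prob {\<omega> \<in> space M. Z \<omega> \<in> {t<..t'}}"
    using tt by (subst finite_measure_Union[symmetric]) (auto intro!: arg_cong[where f=prob])
  ultimately show ?thesis by simp
qed

end

lemma (in real_distribution) atomless_split_point:
  assumes atomless: "\<And>x. measure M {x} = 0"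
  shows "\<exists>t. 0 < measure M {..t} \<and> 0 < measure M {t<..}"
proof -
  obtain a where a: "cdf M a < 1/2"
    using order_tendstoD(2)[OF cdf_lim_at_bot, of "1/2"] by (auto simp: eventually_at_bot_linorder)
  obtain b where b: "cdf M b > 1/2"
    using order_tendstoD(1)[OF cdf_lim_at_top_prob, of "1/2"] by (auto simp: eventually_at_top_linorder)
  have "a \<le> b" using cdf_nondecreasing[of b a] a b by (cases "a \<le> b") auto
  moreover have "isCont (cdf M) x" for x using atomless isCont_cdf by simp
  ultimately obtain t where t: "cdf M t = 1/2"
    using IVT'[of "cdf M" a "1/2" b] a b by (auto intro!: continuous_at_imp_continuous_on)
  have "measure M {t<..} = 1 - measure M {..t}"
    using prob_compl[of "{..t}"] by (simp add: Compl_eq_Diff_UNIV[symmetric] Compl_atMost)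
  with t show ?thesis by (intro exI[of _ t]) (simp add: cdf_def)
qed

locale gaussian_noise_model = prob_space +
  fixes A X E :: "'a \<Rightarrow> real" and \<mu>1 \<mu>2 \<sigma>1 \<sigma>2 c l k \<beta> \<gamma> :: real
  assumes indep_signal_noise:
      "indep_var (borel \<Otimes>\<^sub>M borel) (\<lambda>\<omega>. (A \<omega>, 0 :: real)) (borel \<Otimes>\<^sub>M borel) (\<lambda>\<omega>. (X \<omega>, E \<omega>))"
    \<comment> \<open>indep_var forces both variables into one type, hence A is paired with a dummy 0\<close>
    and indep_noise: "indep_var borel X borel E"
    and X_normal: "distributed M lborel X (\<lambda>x. ennreal (normal_density \<mu>1 \<sigma>1 x))"
    and E_normal: "distributed M lborel E (\<lambda>x. ennreal (normal_density \<mu>2 \<sigma>2 x))"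
    and \<sigma>1_pos: "\<sigma>1 > 0" and \<sigma>2_pos: "\<sigma>2 > 0" and c_nz: "c \<noteq> 0"
    and l_regression: "l * (c\<^sup>2 * \<sigma>1\<^sup>2 + \<sigma>2\<^sup>2) = c * \<sigma>1\<^sup>2"
    and A_density: "\<exists>f. distributed M lborel A f"
    and \<beta>_nz: "\<beta> \<noteq> 0"
begin

definition S :: "'a \<Rightarrow> real" where "S \<omega> = c * X \<omega> + E \<omega>"
definition R :: "'a \<Rightarrow> real" where "R \<omega> = X \<omega> - l * S \<omega>"
definition Y :: "'a \<Rightarrow> real" where "Y \<omega> = k * A \<omega> + S \<omega>"
definition Yhat :: "'a \<Rightarrow> real" where "Yhat \<omega> = \<beta> * l * Y \<omega> + \<gamma> * A \<omega> + \<beta> * R \<omega>"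

abbreviation \<F>\<^sub>Y :: "'a measure" where "\<F>\<^sub>Y \<equiv> vimage_algebra (space M) Y borel"

text \<open>Since R is independent of (A, Y), the value cond_law B y a is P(Yhat \<in> B | Y = y, A = a).\<close>
definition cond_law :: "real set \<Rightarrow> real \<Rightarrow> real \<Rightarrow> real" where
  "cond_law B y a = enn2real (\<integral>\<^sup>+r. indicator B (\<beta> * l * y + \<gamma> * a + \<beta> * r) \<partial>distr M borel R)"

lemma measurable_model [measurable]:
  "A \<in> borel_measurable M" "X \<in> borel_measurable M" "E \<in> borel_measurable M"
  "S \<in> borel_measurable M" "R \<in> borel_measurable M" "Y \<in> borel_measurable M" "Yhat \<in> borel_measurable M"
proof -
  have "(\<lambda>\<omega>. fst (A \<omega>, 0 :: real)) \<in> borel_measurable M"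
    using indep_var_rv1[OF indep_signal_noise] by measurable
  then show A: "A \<in> borel_measurable M" by simp
  show X: "X \<in> borel_measurable M" and E: "E \<in> borel_measurable M"
    using indep_noise by (auto dest: indep_var_rv1 indep_var_rv2)
  show "S \<in> borel_measurable M" "R \<in> borel_measurable M" "Y \<in> borel_measurable M" "Yhat \<in> borel_measurable M"
    unfolding Yhat_def Y_def R_def S_def using A X E by measurable
qed

lemma indep_S_R: "indep_var borel S borel R"
  unfolding R_def S_def
  by (rule indep_var_gaussian_decorrelation[OF indep_noise X_normal E_normal \<sigma>1_pos \<sigma>2_pos l_regression])

lemma indep_A_S_R:
  "indep_var (borel \<Otimes>\<^sub>M borel) (\<lambda>\<omega>. (A \<omega>, 0 :: real)) (borel \<Otimes>\<^sub>M borel) (\<lambda>\<omega>. (S \<omega>, R \<omega>))"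
  using indep_var_compose[OF indep_signal_noise, of id "borel \<Otimes>\<^sub>M borel"
      "\<lambda>(x, e). (c * x + e, x - l * (c * x + e))" "borel \<Otimes>\<^sub>M borel"]
  by (simp add: comp_def S_def R_def)

lemma nn_integral_A_S_R:
  assumes [measurable]: "g \<in> borel_measurable (borel \<Otimes>\<^sub>M (borel \<Otimes>\<^sub>M borel))"
  shows "(\<integral>\<^sup>+\<omega>. g (A \<omega>, S \<omega>, R \<omega>) \<partial>M)
    = (\<integral>\<^sup>+a. \<integral>\<^sup>+s. \<integral>\<^sup>+r. g (a, s, r) \<partial>distr M borel R \<partial>distr M borel S \<partial>distr M borel A)"
proof -
  interpret SR: prob_space "distr M (borel \<Otimes>\<^sub>M borel) (\<lambda>\<omega>. (S \<omega>, R \<omega>))"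
    by (rule prob_space_distr) simp
  have "(\<integral>\<^sup>+\<omega>. g (A \<omega>, S \<omega>, R \<omega>) \<partial>M)
      = (\<integral>\<^sup>+p. \<integral>\<^sup>+q. g (fst p, q) \<partial>distr M (borel \<Otimes>\<^sub>M borel) (\<lambda>\<omega>. (S \<omega>, R \<omega>))
          \<partial>distr M (borel \<Otimes>\<^sub>M borel) (\<lambda>\<omega>. (A \<omega>, 0 :: real)))"
    using nn_integral_indep_var[OF indep_A_S_R, of "\<lambda>(p, q). g (fst p, q)"] by simp
  also have "\<dots> = (\<integral>\<^sup>+a. \<integral>\<^sup>+q. g (a, q) \<partial>distr M (borel \<Otimes>\<^sub>M borel) (\<lambda>\<omega>. (S \<omega>, R \<omega>)) \<partial>distr M borel A)"
    by (subst nn_integral_distr, measurable)+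
  also have "\<dots> = (\<integral>\<^sup>+a. \<integral>\<^sup>+s. \<integral>\<^sup>+r. g (a, s, r) \<partial>distr M borel R \<partial>distr M borel S \<partial>distr M borel A)"
    by (intro nn_integral_cong, subst nn_integral_distr)
      (auto intro!: nn_integral_indep_var[OF indep_S_R])
  finally show ?thesis .
qed

lemma prob_space_law_R: "prob_space (distr M borel R)"
  by (rule prob_space_distr) simp

lemma nn_integral_cond_law_le_1:
  "(\<integral>\<^sup>+r. indicator B (\<beta> * l * y + \<gamma> * a + \<beta> * r) \<partial>distr M borel R) \<le> 1"
proof -
  interpret R: prob_space "distr M borel R" by (rule prob_space_law_R)
  have "(\<integral>\<^sup>+r. indicator B (\<beta> * l * y + \<gamma> * a + \<beta> * r) \<partial>distr M borel R) \<le> (\<integral>\<^sup>+r. 1 \<partial>distr M borel R)"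
    by (rule nn_integral_mono) (simp add: indicator_def)
  then show ?thesis using R.emeasure_space_1 by simp
qed

lemma ennreal_cond_law:
  "ennreal (cond_law B y a) = (\<integral>\<^sup>+r. indicator B (\<beta> * l * y + \<gamma> * a + \<beta> * r) \<partial>distr M borel R)"
  unfolding cond_law_def
  by (rule ennreal_enn2real, rule le_less_trans[OF nn_integral_cond_law_le_1 ennreal_one_less_top])

lemma cond_law_bounds: "0 \<le> cond_law B y a" "cond_law B y a \<le> 1"
  using nn_integral_cond_law_le_1[of B y a] unfolding cond_law_def by (auto simp: enn2real_leI)

lemma measurable_cond_law [measurable]:
  assumes [measurable]: "B \<in> sets borel" "f \<in> borel_measurable N" "g \<in> borel_measurable N"
  shows "(\<lambda>x. cond_law B (f x) (g x)) \<in> borel_measurable N"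
proof -
  interpret R: prob_space "distr M borel R" by (rule prob_space_law_R)
  have "(\<lambda>p. \<integral>\<^sup>+r. indicator B (\<beta> * l * fst p + \<gamma> * snd p + \<beta> * r) \<partial>distr M borel R)
      \<in> borel_measurable (borel \<Otimes>\<^sub>M borel)"
    by (rule R.borel_measurable_nn_integral) measurable
  then have "(\<lambda>p. cond_law B (fst p) (snd p)) \<in> borel_measurable (borel \<Otimes>\<^sub>M borel)"
    unfolding cond_law_def by measurable
  from measurable_comp[OF _ this, of "\<lambda>x. (f x, g x)"] show ?thesis
    by (simp add: comp_def)
qed

lemma integrable_cond_law:
  assumes [measurable]: "B \<in> sets borel" "f \<in> borel_measurable M" "g \<in> borel_measurable M"
  shows "integrable M (\<lambda>x. cond_law B (f x) (g x))"
  by (rule integrable_const_bound[where B=1]) (use cond_law_bounds in \<open>auto simp: abs_le_iff intro: order_trans[OF _ cond_law_bounds(2)]\<close>)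

lemma sigma_finite_subalgebra_\<F>\<^sub>Y: "sigma_finite_subalgebra M \<F>\<^sub>Y"
proof (rule finite_measure_subalgebra_is_sigma_finite)
  have "sets \<F>\<^sub>Y \<subseteq> sets M" by (rule sets_image_in_sets) measurable
  then show "finite_measure_subalgebra M \<F>\<^sub>Y"
    by (simp add: finite_measure_subalgebra_def finite_measure_subalgebra_axioms_def subalgebra_def
        finite_measure_axioms)
qed

lemma Y_measurable_\<F>\<^sub>Y [measurable]: "Y \<in> borel_measurable \<F>\<^sub>Y"
  by (rule measurable_vimage_algebra1) simp

lemma sets_\<F>\<^sub>Y: "C \<in> sets \<F>\<^sub>Y \<Longrightarrow> \<exists>B \<in> sets borel. C = Y -` B \<inter> space M"
  by (subst (asm) sets_vimage_algebra2) auto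

lemma set_integral_Yhat_A:
  assumes [measurable]: "B \<in> sets borel" "T \<in> sets borel" and C: "C \<in> sets \<F>\<^sub>Y"
  shows "(\<integral>\<omega>\<in>C. indicator B (Yhat \<omega>) * indicator T (A \<omega>) \<partial>M)
    = (\<integral>\<omega>\<in>C. indicator T (A \<omega>) * cond_law B (Y \<omega>) (A \<omega>) \<partial>M)"
proof -
  interpret R: prob_space "distr M borel R" by (rule prob_space_law_R)
  obtain D where [measurable]: "D \<in> sets borel" and C_eq: "C = Y -` D \<inter> space M"
    using sets_\<F>\<^sub>Y[OF C] by blast
  have [measurable]: "C \<in> sets M" unfolding C_eq by measurable
  define G where "G = (\<lambda>(a, s, r :: real). indicator D (k * a + s) * indicator T a
      * indicator B (\<beta> * l * (k * a + s) + \<gamma> * a + \<beta> * r) :: ennreal)"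
  define H where "H = (\<lambda>(a, s, r :: real). indicator D (k * a + s) * indicator T a
      * ennreal (cond_law B (k * a + s) a))"
  have G_meas[measurable]: "G \<in> borel_measurable (borel \<Otimes>\<^sub>M (borel \<Otimes>\<^sub>M borel))"
    and H_meas[measurable]: "H \<in> borel_measurable (borel \<Otimes>\<^sub>M (borel \<Otimes>\<^sub>M borel))"
    unfolding G_def H_def by measurable
  \<comment> \<open>integrating out r alone already turns G into H\<close>
  have "(\<integral>\<^sup>+\<omega>. G (A \<omega>, S \<omega>, R \<omega>) \<partial>M) = (\<integral>\<^sup>+\<omega>. H (A \<omega>, S \<omega>, R \<omega>) \<partial>M)"
    unfolding nn_integral_A_S_R[OF G_meas] nn_integral_A_S_R[OF H_meas]
    by (rule nn_integral_cong, rule nn_integral_cong)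
      (simp add: G_def H_def ennreal_cond_law nn_integral_cmult R.emeasure_space_1[simplified])
  moreover have "(\<integral>\<^sup>+\<omega>. ennreal (indicator C \<omega> * (indicator B (Yhat \<omega>) * indicator T (A \<omega>))) \<partial>M)
      = (\<integral>\<^sup>+\<omega>. G (A \<omega>, S \<omega>, R \<omega>) \<partial>M)"
    by (rule nn_integral_cong) (auto simp: G_def C_eq Y_def Yhat_def indicator_def)
  moreover have "(\<integral>\<^sup>+\<omega>. ennreal (indicator C \<omega> * (indicator T (A \<omega>) * cond_law B (Y \<omega>) (A \<omega>))) \<partial>M)
      = (\<integral>\<^sup>+\<omega>. H (A \<omega>, S \<omega>, R \<omega>) \<partial>M)"
    by (rule nn_integral_cong) (auto simp: H_def C_eq Y_def indicator_def)
  moreover have "AE \<omega> in M. 0 \<le> indicator C \<omega> * (indicator T (A \<omega>) * cond_law B (Y \<omega>) (A \<omega>))"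
    using cond_law_bounds by simp
  ultimately show ?thesis
    unfolding set_lebesgue_integral_def
    by (simp add: integral_eq_nn_integral)
qed

lemma cond_indep_if_\<gamma>_eq_0:
  assumes "\<gamma> = 0"
  shows "cond_indep_given M Yhat A Y"
  unfolding cond_indep_given_def
proof (intro ballI)
  fix B T :: "real set" assume [measurable]: "B \<in> sets borel" "T \<in> sets borel"
  interpret sigma_finite_subalgebra M \<F>\<^sub>Y by (rule sigma_finite_subalgebra_\<F>\<^sub>Y)
  define \<phi> where "\<phi> y = cond_law B y 0" for y
  have cond_law_\<phi>: "cond_law B y a = \<phi> y" for y a
    unfolding \<phi>_def cond_law_def using assms by simp
  have [measurable]: "\<phi> \<in> borel_measurable borel" unfolding \<phi>_def by measurable
  have int_\<phi>: "integrable M (\<lambda>x. \<phi> (Y x))"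
    using integrable_cond_law[of B Y A] by (simp add: cond_law_\<phi>)
  have int_\<phi>_T: "integrable M (\<lambda>x. \<phi> (Y x) * indicator T (A x))"
    by (rule Bochner_Integration.integrable_bound[OF int_\<phi>]) (auto simp: indicator_def)
  have int_ind: "integrable M (\<lambda>x. indicator B (Yhat x) * indicator T' (A x) :: real)"
    if [measurable]: "T' \<in> sets borel" for T'
    by (rule integrable_const_bound[where B=1]) (auto simp: indicator_def)
  have "AE x in M. real_cond_exp M \<F>\<^sub>Y (\<lambda>x. indicator B (Yhat x) * indicator T (A x)) x
      = real_cond_exp M \<F>\<^sub>Y (\<lambda>x. \<phi> (Y x) * indicator T (A x)) x"
  proof (rule real_cond_exp_charact)
    fix C assume C: "C \<in> sets \<F>\<^sub>Y"
    have "(\<integral>x\<in>C. indicator B (Yhat x) * indicator T (A x) \<partial>M) = (\<integral>x\<in>C. \<phi> (Y x) * indicator T (A x) \<partial>M)"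
      using set_integral_Yhat_A[OF _ _ C] by (simp add: cond_law_\<phi> mult.commute)
    also have "\<dots> = (\<integral>x\<in>C. real_cond_exp M \<F>\<^sub>Y (\<lambda>x. \<phi> (Y x) * indicator T (A x)) x \<partial>M)"
      by (rule real_cond_exp_intA[OF int_\<phi>_T C])
    finally show "(\<integral>x\<in>C. indicator B (Yhat x) * indicator T (A x) \<partial>M)
      = (\<integral>x\<in>C. real_cond_exp M \<F>\<^sub>Y (\<lambda>x. \<phi> (Y x) * indicator T (A x)) x \<partial>M)" .
  qed (auto simp: int_ind int_\<phi>_T intro: real_cond_exp_int)
  moreover have "AE x in M. real_cond_exp M \<F>\<^sub>Y (\<lambda>x. \<phi> (Y x) * indicator T (A x)) x
      = \<phi> (Y x) * real_cond_exp M \<F>\<^sub>Y (\<lambda>x. indicator T (A x)) x"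
    by (rule real_cond_exp_mult) (auto simp: int_\<phi>_T)
  moreover have "AE x in M. real_cond_exp M \<F>\<^sub>Y (\<lambda>x. indicator B (Yhat x)) x = \<phi> (Y x)"
  proof (rule real_cond_exp_charact)
    fix C assume "C \<in> sets \<F>\<^sub>Y"
    then show "(\<integral>x\<in>C. indicator B (Yhat x) \<partial>M) = (\<integral>x\<in>C. \<phi> (Y x) \<partial>M)"
      using set_integral_Yhat_A[of B UNIV C] by (simp add: cond_law_\<phi>)
  qed (use int_ind[of UNIV] int_\<phi> in simp_all)
  ultimately show "AE x in M. real_cond_exp M \<F>\<^sub>Y (\<lambda>x. indicator B (Yhat x) * indicator T (A x)) x
      = real_cond_exp M \<F>\<^sub>Y (\<lambda>x. indicator B (Yhat x)) x * real_cond_exp M \<F>\<^sub>Y (\<lambda>x. indicator T (A x)) x"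
    by eventually_elim simp
qed

lemma S_normal: "\<exists>m s. s > 0 \<and> distributed M lborel S (\<lambda>x. ennreal (normal_density m s x))"
  using indep_normal_linear_combination[OF indep_noise X_normal E_normal \<sigma>1_pos \<sigma>2_pos c_nz one_neq_zero]
  by (simp add: S_def[abs_def])

lemma \<beta>R_normal: "\<exists>m s. s > 0 \<and> distributed M lborel (\<lambda>\<omega>. \<beta> * R \<omega>) (\<lambda>x. ennreal (normal_density m s x))"
proof -
  have l_nz: "l \<noteq> 0" using l_regression c_nz \<sigma>1_pos by auto
  moreover have "l * \<sigma>2\<^sup>2 = (1 - l * c) * c * \<sigma>1\<^sup>2"
    using l_regression by (simp add: algebra_simps power2_eq_square)
  ultimately have "1 - l * c \<noteq> 0" using \<sigma>2_pos by auto
  with l_nz \<beta>_nz have "\<beta> * (1 - l * c) \<noteq> 0" "- (\<beta> * l) \<noteq> 0" by auto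
  from indep_normal_linear_combination[OF indep_noise X_normal E_normal \<sigma>1_pos \<sigma>2_pos this]
  show ?thesis by (simp add: R_def S_def algebra_simps)
qed

lemma cond_law_eq_prob:
  assumes [measurable]: "B \<in> sets borel"
  shows "cond_law B y a = prob {\<omega> \<in> space M. \<beta> * l * y + \<gamma> * a + \<beta> * R \<omega> \<in> B}"
proof -
  have "ennreal (cond_law B y a) = (\<integral>\<^sup>+\<omega>. indicator B (\<beta> * l * y + \<gamma> * a + \<beta> * R \<omega>) \<partial>M)"
    unfolding ennreal_cond_law by (subst nn_integral_distr) auto
  also have "\<dots> = emeasure M {\<omega> \<in> space M. \<beta> * l * y + \<gamma> * a + \<beta> * R \<omega> \<in> B}"
    by (rule nn_integral_indicator_comp) measurable
  finally show ?thesis using cond_law_bounds(1) by (simp add: emeasure_eq_measure)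
qed

definition tail :: "real set" where "tail = (if \<gamma> > 0 then {..0} else {0<..})"

lemma tail_borel [measurable]: "tail \<in> sets borel"
  unfolding tail_def by simp

lemma cond_law_tail_strict_antimono:
  assumes "\<gamma> \<noteq> 0" and "a < a'"
  shows "cond_law tail y a' < cond_law tail y a"
proof -
  obtain m s where s: "s > 0"
    and W: "distributed M lborel (\<lambda>\<omega>. \<beta> * R \<omega>) (\<lambda>x. ennreal (normal_density m s x))"
    using \<beta>R_normal by blast
  define t where "t a = - (\<beta> * l * y + \<gamma> * a)" for a
  let ?F = "\<lambda>t. prob {\<omega> \<in> space M. \<beta> * R \<omega> \<le> t}"
  show ?thesis
  proof (cases "\<gamma> > 0")
    case True
    then have "cond_law tail y a = ?F (t a)" for a
      unfolding cond_law_eq_prob[OF tail_borel]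
      by (intro arg_cong[where f=prob]) (auto simp: tail_def t_def)
    moreover have "t a' < t a" using True \<open>a < a'\<close> by (simp add: t_def)
    ultimately show ?thesis using normal_cdf_strict_mono[OF W s] by simp
  next
    case False
    then have "cond_law tail y a = 1 - ?F (t a)" for a
      unfolding cond_law_eq_prob[OF tail_borel]
      by (subst prob_compl[symmetric]) (auto intro!: arg_cong[where f=prob] simp: tail_def t_def)
    moreover have "t a < t a'" using False assms by (simp add: t_def mult_strict_left_mono_neg)
    ultimately show ?thesis using normal_cdf_strict_mono[OF W s] by simp
  qed
qed

lemma cond_law_tail_antimono: "\<gamma> \<noteq> 0 \<Longrightarrow> a \<le> a' \<Longrightarrow> cond_law tail y a' \<le> cond_law tail y a"
  using cond_law_tail_strict_antimono[of a a' y] by (cases "a = a'") auto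

lemma set_integral_cond_law_eq_cond_exp:
  assumes CI: "cond_indep_given M Yhat A Y"
    and [measurable]: "B \<in> sets borel" "T \<in> sets borel" and C: "C \<in> sets \<F>\<^sub>Y"
  shows "(\<integral>x\<in>{x \<in> C. A x \<in> T}. cond_law B (Y x) (A x) \<partial>M)
    = (\<integral>x\<in>{x \<in> C. A x \<in> T}. real_cond_exp M \<F>\<^sub>Y (\<lambda>x. indicator B (Yhat x)) x \<partial>M)"
proof -
  interpret sigma_finite_subalgebra M \<F>\<^sub>Y by (rule sigma_finite_subalgebra_\<F>\<^sub>Y)
  have [measurable]: "C \<in> sets M" using C subalg by (auto simp: subalgebra_def)
  define \<pi> where "\<pi> = real_cond_exp M \<F>\<^sub>Y (\<lambda>x. indicator B (Yhat x))"
  have [measurable]: "\<pi> \<in> borel_measurable \<F>\<^sub>Y" "\<pi> \<in> borel_measurable M" unfolding \<pi>_def by simp_all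
  have int_\<pi>: "integrable M \<pi>"
    unfolding \<pi>_def by (rule real_cond_exp_int) (rule integrable_const_bound[where B=1], auto)
  have int_\<pi>_C: "integrable M (\<lambda>x. indicator C x * \<pi> x * indicator T (A x))"
    by (rule Bochner_Integration.integrable_bound[OF int_\<pi>]) (auto simp: indicator_def)
  have int_ind: "integrable M (\<lambda>x. indicator B (Yhat x) * indicator T (A x) :: real)"
    by (rule integrable_const_bound[where B=1]) (auto simp: indicator_def)
  have ind_set: "indicator {x \<in> C. A x \<in> T} x = (indicator C x * indicator T (A x) :: real)" for x
    by (simp add: indicator_def)
  have "(\<integral>x\<in>{x \<in> C. A x \<in> T}. cond_law B (Y x) (A x) \<partial>M)
      = (\<integral>x\<in>C. indicator T (A x) * cond_law B (Y x) (A x) \<partial>M)"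
    unfolding set_lebesgue_integral_def ind_set by (simp add: ac_simps)
  also have "\<dots> = (\<integral>x\<in>C. real_cond_exp M \<F>\<^sub>Y (\<lambda>x. indicator B (Yhat x) * indicator T (A x)) x \<partial>M)"
    using set_integral_Yhat_A[OF _ _ C] real_cond_exp_intA[OF int_ind C] by simp
  also have "\<dots> = (\<integral>x. (indicator C x * \<pi> x) * real_cond_exp M \<F>\<^sub>Y (\<lambda>x. indicator T (A x)) x \<partial>M)"
    unfolding set_lebesgue_integral_def
  proof (rule integral_cong_AE)
    show "AE x in M. indicator C x *\<^sub>R real_cond_exp M \<F>\<^sub>Y (\<lambda>x. indicator B (Yhat x) * indicator T (A x)) x
        = indicator C x * \<pi> x * real_cond_exp M \<F>\<^sub>Y (\<lambda>x. indicator T (A x)) x"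
    proof -
      have "AE x in M. real_cond_exp M \<F>\<^sub>Y (\<lambda>x. indicator B (Yhat x) * indicator T (A x)) x
          = \<pi> x * real_cond_exp M \<F>\<^sub>Y (\<lambda>x. indicator T (A x)) x"
        using CI \<open>B \<in> sets borel\<close> \<open>T \<in> sets borel\<close> unfolding cond_indep_given_def \<pi>_def by blast
      then show ?thesis by eventually_elim simp
    qed
  qed simp_all
  also have "\<dots> = (\<integral>x. (indicator C x * \<pi> x) * indicator T (A x) \<partial>M)"
    by (rule real_cond_exp_intg(2)) (use int_\<pi>_C C in auto)
  also have "\<dots> = (\<integral>x\<in>{x \<in> C. A x \<in> T}. \<pi> x \<partial>M)"
    unfolding set_lebesgue_integral_def ind_set by (simp add: ac_simps)
  finally show ?thesis unfolding \<pi>_def .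
qed

lemma A_Y_joint_null:
  assumes [measurable]: "T \<in> sets borel" "D \<in> sets borel"
    and null: "AE x in M. \<not> (A x \<in> T \<and> Y x \<in> D)"
  shows "emeasure (distr M borel A) T = 0 \<or> emeasure lborel D = 0"
proof (rule disjCI)
  assume D_nonnull: "emeasure lborel D \<noteq> 0"
  interpret R: prob_space "distr M borel R" by (rule prob_space_law_R)
  obtain m s where s: "s > 0" and S: "distributed M lborel S (\<lambda>x. ennreal (normal_density m s x))"
    using S_normal by blast
  define I where "I a = (\<integral>\<^sup>+s. indicator D (k * a + s) \<partial>distr M borel S)" for a
  have [measurable]: "I \<in> borel_measurable borel"
  proof -
    interpret S: prob_space "distr M borel S" by (rule prob_space_distr) simp
    show ?thesis unfolding I_def by measurable
  qed
  have I_nz: "I a \<noteq> 0" for a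
  proof -
    have "distributed M lborel (\<lambda>\<omega>. k * a + 1 * S \<omega>) (\<lambda>x. ennreal (normal_density (k * a + 1 * m) (\<bar>1\<bar> * s) x))"
      by (rule normal_density_affine[OF S]) (use s in auto)
    then have "emeasure M {\<omega> \<in> space M. k * a + S \<omega> \<in> D} \<noteq> 0"
      using normal_emeasure_nonzero[OF _ _ _ D_nonnull] s by simp
    moreover have "I a = (\<integral>\<^sup>+\<omega>. indicator D (k * a + S \<omega>) \<partial>M)"
      unfolding I_def by (subst nn_integral_distr) auto
    moreover have "\<dots> = emeasure M {\<omega> \<in> space M. k * a + S \<omega> \<in> D}"
      by (rule nn_integral_indicator_comp) measurable
    ultimately show ?thesis by simp
  qed
  have "(\<integral>\<^sup>+a. indicator T a * I a \<partial>distr M borel A)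
      = (\<integral>\<^sup>+\<omega>. indicator T (A \<omega>) * indicator D (k * A \<omega> + S \<omega>) \<partial>M)"
    using nn_integral_A_S_R[of "\<lambda>(a, s, r). indicator T a * indicator D (k * a + s)"]
    by (simp add: I_def nn_integral_cmult R.emeasure_space_1[simplified])
  also have "\<dots> = 0"
    using null by (subst nn_integral_0_iff_AE) (auto elim!: eventually_mono simp: Y_def indicator_def)
  finally have "AE a in distr M borel A. indicator T a * I a = 0"
    by (subst (asm) nn_integral_0_iff_AE) auto
  then have "AE a in distr M borel A. a \<notin> T"
    by eventually_elim (use I_nz in \<open>auto simp: indicator_def\<close>)
  then show "emeasure (distr M borel A) T = 0"
    by (subst (asm) AE_iff_null_sets[symmetric]) auto
qed

lemma A_atomless: "measure (distr M borel A) {x} = 0"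
proof -
  obtain f where f: "distributed M lborel A f" using A_density by blast
  have "emeasure (distr M borel A) {x} = (\<integral>\<^sup>+y. f y * indicator {x} y \<partial>lborel)"
    using distributed_emeasure[OF f, of "{x}"] by (simp add: emeasure_distr)
  also have "\<dots> = 0"
    using f AE_lborel_singleton[of x]
    by (subst nn_integral_0_iff_AE) (auto simp: distributed_def elim!: eventually_mono)
  finally show ?thesis by (simp add: measure_def)
qed

definition \<pi>\<^sub>t\<^sub>a\<^sub>i\<^sub>l :: "'a \<Rightarrow> real" where
  "\<pi>\<^sub>t\<^sub>a\<^sub>i\<^sub>l = real_cond_exp M \<F>\<^sub>Y (\<lambda>x. indicator tail (Yhat x))"

lemma measurable_\<pi>\<^sub>t\<^sub>a\<^sub>i\<^sub>l [measurable]: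
  "\<pi>\<^sub>t\<^sub>a\<^sub>i\<^sub>l \<in> borel_measurable \<F>\<^sub>Y" "\<pi>\<^sub>t\<^sub>a\<^sub>i\<^sub>l \<in> borel_measurable M"
  unfolding \<pi>\<^sub>t\<^sub>a\<^sub>i\<^sub>l_def by simp_all

lemma set_integrable_tail:
  assumes C: "C \<in> sets \<F>\<^sub>Y" and [measurable]: "T \<in> sets borel"
  shows "set_integrable M {x \<in> C. A x \<in> T} (\<lambda>x. cond_law tail (Y x) (A x))"
    and "set_integrable M {x \<in> C. A x \<in> T} \<pi>\<^sub>t\<^sub>a\<^sub>i\<^sub>l"
proof -
  interpret sigma_finite_subalgebra M \<F>\<^sub>Y by (rule sigma_finite_subalgebra_\<F>\<^sub>Y)
  have [measurable]: "C \<in> sets M" using C subalg by (auto simp: subalgebra_def)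
  have "integrable M \<pi>\<^sub>t\<^sub>a\<^sub>i\<^sub>l"
    unfolding \<pi>\<^sub>t\<^sub>a\<^sub>i\<^sub>l_def by (rule real_cond_exp_int) (rule integrable_const_bound[where B=1], auto)
  moreover have D: "{x \<in> C. A x \<in> T} \<in> sets M" by measurable
  ultimately show "set_integrable M {x \<in> C. A x \<in> T} (\<lambda>x. cond_law tail (Y x) (A x))"
    and "set_integrable M {x \<in> C. A x \<in> T} \<pi>\<^sub>t\<^sub>a\<^sub>i\<^sub>l"
    using integrable_mult_indicator[OF D integrable_cond_law[of tail Y A]]
      integrable_mult_indicator[OF D, of \<pi>\<^sub>t\<^sub>a\<^sub>i\<^sub>l]
    unfolding set_integrable_def by simp_all
qed

lemma AE_not_above_split:
  assumes CI: "cond_indep_given M Yhat A Y" and \<gamma>: "\<gamma> \<noteq> 0" and C: "C \<in> sets \<F>\<^sub>Y"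
    and below: "\<And>x. x \<in> C \<Longrightarrow> cond_law tail (Y x) t \<le> \<pi>\<^sub>t\<^sub>a\<^sub>i\<^sub>l x"
  shows "AE x in M. \<not> (x \<in> C \<and> t < A x)"
proof -
  have [measurable]: "C \<in> sets M" using C sigma_finite_subalgebra_\<F>\<^sub>Y
    by (auto simp: sigma_finite_subalgebra_def subalgebra_def)
  have "AE x in M. x \<notin> {x \<in> C. A x \<in> {t<..}}"
  proof (rule AE_not_in_if_set_integral_eq_less)
    show "(\<integral>x\<in>{x \<in> C. A x \<in> {t<..}}. cond_law tail (Y x) (A x) \<partial>M)
        = (\<integral>x\<in>{x \<in> C. A x \<in> {t<..}}. \<pi>\<^sub>t\<^sub>a\<^sub>i\<^sub>l x \<partial>M)"
      unfolding \<pi>\<^sub>t\<^sub>a\<^sub>i\<^sub>l_def by (rule set_integral_cond_law_eq_cond_exp[OF CI _ _ C]) simp_all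
    show "cond_law tail (Y x) (A x) < \<pi>\<^sub>t\<^sub>a\<^sub>i\<^sub>l x" if "x \<in> {x \<in> C. A x \<in> {t<..}}" for x
      using cond_law_tail_strict_antimono[OF \<gamma>, of t "A x" "Y x"] below[of x] that by simp
  qed (use set_integrable_tail[OF C, of "{t<..}"] in simp_all)
  then show ?thesis by eventually_elim auto
qed

lemma AE_not_below_split:
  assumes CI: "cond_indep_given M Yhat A Y" and \<gamma>: "\<gamma> \<noteq> 0" and C: "C \<in> sets \<F>\<^sub>Y"
    and above: "\<And>x. x \<in> C \<Longrightarrow> \<pi>\<^sub>t\<^sub>a\<^sub>i\<^sub>l x < cond_law tail (Y x) t"
  shows "AE x in M. \<not> (x \<in> C \<and> A x \<le> t)"
proof -
  have [measurable]: "C \<in> sets M" using C sigma_finite_subalgebra_\<F>\<^sub>Y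
    by (auto simp: sigma_finite_subalgebra_def subalgebra_def)
  have "AE x in M. x \<notin> {x \<in> C. A x \<in> {..t}}"
  proof (rule AE_not_in_if_set_integral_eq_less)
    show "(\<integral>x\<in>{x \<in> C. A x \<in> {..t}}. \<pi>\<^sub>t\<^sub>a\<^sub>i\<^sub>l x \<partial>M)
        = (\<integral>x\<in>{x \<in> C. A x \<in> {..t}}. cond_law tail (Y x) (A x) \<partial>M)"
      unfolding \<pi>\<^sub>t\<^sub>a\<^sub>i\<^sub>l_def by (rule set_integral_cond_law_eq_cond_exp[OF CI _ _ C, symmetric]) simp_all
    show "\<pi>\<^sub>t\<^sub>a\<^sub>i\<^sub>l x < cond_law tail (Y x) (A x)" if "x \<in> {x \<in> C. A x \<in> {..t}}" for x
      using cond_law_tail_antimono[OF \<gamma>, of "A x" t "Y x"] above[of x] that by simp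
  qed (use set_integrable_tail[OF C, of "{..t}"] in simp_all)
  then show ?thesis by eventually_elim auto
qed

lemma not_cond_indep_if_\<gamma>_neq_0:
  assumes CI: "cond_indep_given M Yhat A Y" and \<gamma>: "\<gamma> \<noteq> 0"
  shows False
proof -
  interpret A: real_distribution "distr M borel A" by simp
  obtain t where t: "0 < measure (distr M borel A) {..t}" "0 < measure (distr M borel A) {t<..}"
    using A.atomless_split_point[OF A_atomless] by blast
  define C where "C = {x \<in> space M. cond_law tail (Y x) t \<le> \<pi>\<^sub>t\<^sub>a\<^sub>i\<^sub>l x}"
  have C_\<F>\<^sub>Y: "C \<in> sets \<F>\<^sub>Y"
    unfolding C_def by (subst space_vimage_algebra[symmetric, of _ Y borel]) measurable
  then obtain D where [measurable]: "D \<in> sets borel" and C_eq: "C = Y -` D \<inter> space M"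
    using sets_\<F>\<^sub>Y by blast
  have "space M - C \<in> sets \<F>\<^sub>Y"
    using sets.compl_sets[OF C_\<F>\<^sub>Y] by simp
  have "AE x in M. \<not> (x \<in> C \<and> t < A x)"
    by (rule AE_not_above_split[OF CI \<gamma> C_\<F>\<^sub>Y]) (simp add: C_def)
  then have "AE x in M. \<not> (A x \<in> {t<..} \<and> Y x \<in> D)"
    using AE_space by eventually_elim (auto simp: C_eq)
  have "AE x in M. \<not> (x \<in> space M - C \<and> A x \<le> t)"
    by (rule AE_not_below_split[OF CI \<gamma> \<open>space M - C \<in> sets \<F>\<^sub>Y\<close>]) (auto simp: C_def)
  then have "AE x in M. \<not> (A x \<in> {..t} \<and> Y x \<in> - D)"
    using AE_space by eventually_elim (auto simp: C_eq)
  with \<open>AE x in M. \<not> (A x \<in> {t<..} \<and> Y x \<in> D)\<close>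
  have "emeasure lborel D = 0" "emeasure lborel (- D) = 0"
    using A_Y_joint_null[of "{t<..}" D] A_Y_joint_null[of "{..t}" "- D"] t
    by (auto simp: A.emeasure_eq_measure)
  moreover have "emeasure lborel (D \<union> - D) \<le> emeasure lborel D + emeasure lborel (- D)"
    by (rule emeasure_subadditive) auto
  ultimately show False by simp
qed

theorem cond_indep_iff_\<gamma>_eq_0: "cond_indep_given M Yhat A Y \<longleftrightarrow> \<gamma> = 0"
  using cond_indep_if_\<gamma>_eq_0 not_cond_indep_if_\<gamma>_neq_0 by blast

end

lemma (in prob_space) indep_vars_four_regroup:
  fixes A X H Z :: "'a \<Rightarrow> real"
  assumes ind: "indep_vars (\<lambda>_. borel) (\<lambda>i. [A, X, H, Z] ! i) {0, 1, 2, 3 :: nat}"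
  shows "indep_var (borel \<Otimes>\<^sub>M borel) (\<lambda>\<omega>. (A \<omega>, 0 :: real)) (borel \<Otimes>\<^sub>M borel) (\<lambda>\<omega>. (X \<omega>, Z \<omega> + d * H \<omega>))"
    and "indep_var borel X borel (\<lambda>\<omega>. Z \<omega> + d * H \<omega>)"
proof -
  have "indep_var (Pi\<^sub>M {0} (\<lambda>_. borel)) (\<lambda>\<omega>. restrict (\<lambda>i. ([A, X, H, Z] ! i) \<omega>) {0})
      (Pi\<^sub>M {1, 2, 3} (\<lambda>_. borel)) (\<lambda>\<omega>. restrict (\<lambda>i. ([A, X, H, Z] ! i) \<omega>) {1, 2, 3})"
    by (rule indep_var_restrict[OF ind]) auto
  from indep_var_compose[OF this, of "\<lambda>f. (f 0, 0)" "borel \<Otimes>\<^sub>M borel" "\<lambda>f. (f 1, f 3 + d * f 2)" "borel \<Otimes>\<^sub>M borel"]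
  show "indep_var (borel \<Otimes>\<^sub>M borel) (\<lambda>\<omega>. (A \<omega>, 0 :: real)) (borel \<Otimes>\<^sub>M borel) (\<lambda>\<omega>. (X \<omega>, Z \<omega> + d * H \<omega>))"
    by (simp add: comp_def)
  have "indep_var (Pi\<^sub>M {1} (\<lambda>_. borel)) (\<lambda>\<omega>. restrict (\<lambda>i. ([A, X, H, Z] ! i) \<omega>) {1})
      (Pi\<^sub>M {2, 3} (\<lambda>_. borel)) (\<lambda>\<omega>. restrict (\<lambda>i. ([A, X, H, Z] ! i) \<omega>) {2, 3})"
    by (rule indep_var_restrict[OF ind]) auto
  from indep_var_compose[OF this, of "\<lambda>f. f 1" borel "\<lambda>f. f 3 + d * f 2" borel]
  show "indep_var borel X borel (\<lambda>\<omega>. Z \<omega> + d * H \<omega>)"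
    by (simp add: comp_def)
qed

theorem mainTheorem2:
  fixes M :: "'a measure"
    and A E_X E_H E_Y :: "'a \<Rightarrow> real"
    and q b c d \<alpha> \<beta> \<mu>1 \<mu>2 \<sigma>EX \<sigma>E :: real
  assumes P: "prob_space M"
    and indep: "prob_space.indep_vars M (\<lambda>_. borel) (\<lambda>i. [A, E_X, E_H, E_Y] ! i) {0, 1, 2, 3 :: nat}"
    and A_density: "\<exists>f. distributed M lborel A f"
    and c_nz: "c \<noteq> 0"
    and qcbd_nz: "q * c + b * d \<noteq> 0"
    and beta_nz: "\<beta> \<noteq> 0"
    and sEX_pos: "\<sigma>EX > 0"
    and sE_pos: "\<sigma>E > 0"
    and EX_gauss: "distributed M lborel E_X (\<lambda>x. ennreal (normal_density \<mu>1 \<sigma>EX x))"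
    and E_gauss: "distributed M lborel (\<lambda>\<omega>. E_Y \<omega> + d * E_H \<omega>)
                    (\<lambda>x. ennreal (normal_density \<mu>2 \<sigma>E x))"
  shows "cond_indep_given M
           (\<lambda>\<omega>. \<alpha> * A \<omega> + \<beta> * (q * A \<omega> + E_X \<omega>))
           A
           (\<lambda>\<omega>. c * (q * A \<omega> + E_X \<omega>) + d * (b * A \<omega> + E_H \<omega>) + E_Y \<omega>)
         \<longleftrightarrow> \<alpha> / \<beta> = (b * d * c * \<sigma>EX\<^sup>2 - q * \<sigma>E\<^sup>2) / (c\<^sup>2 * \<sigma>EX\<^sup>2 + \<sigma>E\<^sup>2)"
proof -
  interpret prob_space M by (rule P)
  define l where "l = c * \<sigma>EX\<^sup>2 / (c\<^sup>2 * \<sigma>EX\<^sup>2 + \<sigma>E\<^sup>2)"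
  define k where "k = q * c + b * d"
  define \<gamma> where "\<gamma> = \<alpha> + \<beta> * q - \<beta> * l * k"
  have var_pos: "c\<^sup>2 * \<sigma>EX\<^sup>2 + \<sigma>E\<^sup>2 > 0" using sE_pos by (simp add: add_nonneg_pos)
  interpret gaussian_noise_model M A E_X "\<lambda>\<omega>. E_Y \<omega> + d * E_H \<omega>" \<mu>1 \<mu>2 \<sigma>EX \<sigma>E c l k \<beta> \<gamma>
    using indep_vars_four_regroup[OF indep] EX_gauss E_gauss sEX_pos sE_pos c_nz A_density beta_nz var_pos
    by unfold_locales (simp_all add: l_def)
  have "(\<lambda>\<omega>. c * (q * A \<omega> + E_X \<omega>) + d * (b * A \<omega> + E_H \<omega>) + E_Y \<omega>) = Y"
    unfolding Y_def[abs_def] S_def[abs_def] by (simp add: k_def algebra_simps)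
  moreover have "(\<lambda>\<omega>. \<alpha> * A \<omega> + \<beta> * (q * A \<omega> + E_X \<omega>)) = Yhat"
    unfolding Yhat_def[abs_def] Y_def[abs_def] R_def[abs_def] S_def[abs_def]
    by (simp add: \<gamma>_def algebra_simps)
  moreover have "\<gamma> = 0 \<longleftrightarrow> \<alpha> / \<beta> = (b * d * c * \<sigma>EX\<^sup>2 - q * \<sigma>E\<^sup>2) / (c\<^sup>2 * \<sigma>EX\<^sup>2 + \<sigma>E\<^sup>2)"
    using beta_nz var_pos unfolding \<gamma>_def l_def k_def by (auto simp: field_simps power2_eq_square)
  ultimately show ?thesis using cond_indep_iff_\<gamma>_eq_0 by simp
qed

end
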